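(* Let $\mu>0$ and $\mathbf{C}>0$, and let all policies be restricted to the class $\Pi_{\mathbf{C}}$ of conditional densities bounded by $\mathbf{C}$ (defined in the context). Then for every bounded value function $V:\mathcal{S}\to\mathbb{R}$ and every $s\in\mathcal{S}$, $$\mathcal{B}_{\mu}V(s)-\mathcal{B}V(s)\in[\mu(1-\mathbf{C}),\,\mu].$$
   Context: Consider a Markov decision process with state space $\mathcal{S}$, continuous action space $\mathcal{A}\subseteq\mathbb{R}$ (Lebesgue measurable; $\sigma$ denotes Lebesgue measure), transition kernel $\mathbf{P}(\cdot\mid s,a)$, bounded reward function $R(s',s,a)$ and discount factor $\gamma\in[0,1)$. For a bounded $V:\mathcal{S}\to\mathbb{R}$ put $Q_V(s,a)=\mathbb{E}_{S'\sim\mathbf{P}(\cdot\mid s,a)}[R(S',s,a)+\gamma V(S')]$. (Standing assumption) Every policy considered is a conditional probability density $\pi(\cdot\mid s)$ on $\mathcal{A}$ (w.r.t. Lebesgue measure) with $\pi(a\mid s)\le\mathbf{C}$ for all $s,a$; denote this class by $\Pi_{\mathbf{C}}$. The Bellman operator is $\mathcal{B}V(s)=\sup_{\pi\in\Pi_{\mathbf{C}}}\int_{\mathcal{A}}Q_V(s,a)\pi(a\mid s)\,da$, and for $\mu>0$ the quasi-optimal Bellman operator is $$\mathcal{B}_{\mu}V(s)=\sup_{\pi\in\Pi_{\mathbf{C}}}\int_{\mathcal{A}}\Big[Q_V(s,a)\pi(a\mid s)+\mu\big(\pi(a\mid s)-\pi(a\mid s)^2\big)\Big]da .$$ *)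

theory Defs
  imports "HOL-Probability.Probability"
begin

definition Qfun :: "('s \<Rightarrow> real \<Rightarrow> 's measure) \<Rightarrow> ('s \<Rightarrow> 's \<Rightarrow> real \<Rightarrow> real) \<Rightarrow> real
    \<Rightarrow> ('s \<Rightarrow> real) \<Rightarrow> 's \<Rightarrow> real \<Rightarrow> real" where
  "Qfun P R \<gamma> V s a = (\<integral>s'. R s' s a + \<gamma> * V s' \<partial>(P s a))"

definition PiC :: "real set \<Rightarrow> real \<Rightarrow> ('s \<Rightarrow> real \<Rightarrow> real) set" where
  "PiC A C = {\<pi>. \<forall>s. set_integrable lborel A (\<pi> s)
                  \<and> (\<forall>a\<in>A. 0 \<le> \<pi> s a \<and> \<pi> s a \<le> C)
                  \<and> (\<integral>a\<in>A. \<pi> s a \<partial>lborel) = 1}"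

definition bellman :: "('s \<Rightarrow> real \<Rightarrow> 's measure) \<Rightarrow> ('s \<Rightarrow> 's \<Rightarrow> real \<Rightarrow> real) \<Rightarrow> real
    \<Rightarrow> real set \<Rightarrow> real \<Rightarrow> ('s \<Rightarrow> real) \<Rightarrow> 's \<Rightarrow> real" where
  "bellman P R \<gamma> A C V s =
     (SUP \<pi>\<in>PiC A C. \<integral>a\<in>A. Qfun P R \<gamma> V s a * \<pi> s a \<partial>lborel)"

definition qbellman :: "real \<Rightarrow> ('s \<Rightarrow> real \<Rightarrow> 's measure) \<Rightarrow> ('s \<Rightarrow> 's \<Rightarrow> real \<Rightarrow> real) \<Rightarrow> real
    \<Rightarrow> real set \<Rightarrow> real \<Rightarrow> ('s \<Rightarrow> real) \<Rightarrow> 's \<Rightarrow> real" where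
  "qbellman \<mu> P R \<gamma> A C V s =
     (SUP \<pi>\<in>PiC A C. \<integral>a\<in>A. Qfun P R \<gamma> V s a * \<pi> s a + \<mu> * (\<pi> s a - (\<pi> s a)\<^sup>2) \<partial>lborel)"

end

(* For every admissible density p the regularizer contributes
   mu * (int p - int p^2) = mu * (1 - int p^2), and 0 <= int p^2 <= C * int p = C.
   So policy by policy the regularized objective exceeds the plain one by an amount
   in [mu (1 - C), mu], and these bounds survive taking suprema over Pi_C. *)

theory Submission
  imports Defs
begin

lemma integral_measurable_subprob_algebra2:
  fixes f :: "'a \<Rightarrow> 'b \<Rightarrow> 'c::{banach, second_countable_topology}"
  assumes f[measurable]: "(\<lambda>(x, y). f x y) \<in> borel_measurable (M \<Otimes>\<^sub>M N)"
    and L[measurable]: "L \<in> M \<rightarrow>\<^sub>M subprob_algebra N"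
  shows "(\<lambda>x. integral\<^sup>L (L x) (f x)) \<in> borel_measurable M"
proof -
  note integral_measurable_subprob_algebra[measurable] measurable_distr2[measurable]
  have "(\<lambda>x. integral\<^sup>L (distr (L x) (M \<Otimes>\<^sub>M N) (\<lambda>y. (x, y))) (\<lambda>(x, y). f x y)) \<in> borel_measurable M"
    by measurable
  moreover have "integral\<^sup>L (distr (L x) (M \<Otimes>\<^sub>M N) (\<lambda>y. (x, y))) (\<lambda>(x, y). f x y) = integral\<^sup>L (L x) (f x)"
    if x: "x \<in> space M" for x
  proof -
    have "(\<lambda>y. (x, y)) \<in> L x \<rightarrow>\<^sub>M M \<Otimes>\<^sub>M N"
      by (intro measurable_Pair measurable_const[OF x] measurable_ident_sets[OF sets_kernel[OF L x]])
    then show ?thesis by (simp only: integral_distr[OF _ f] case_prod_conv)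
  qed
  ultimately show ?thesis by (simp cong: measurable_cong)
qed

lemma set_integrable_mult_bounded:
  fixes f g :: "'a \<Rightarrow> real"
  assumes f: "set_integrable M A f" and g: "set_borel_measurable M A g"
    and bound: "\<And>x. x \<in> A \<Longrightarrow> \<bar>g x\<bar> \<le> B"
  shows "set_integrable M A (\<lambda>x. g x * f x)"
proof (rule set_integrable_bound)
  show "set_integrable M A (\<lambda>x. B * f x)" using f by simp
  have "(\<lambda>x. indicator A x * f x) \<in> borel_measurable M"
    using f unfolding set_integrable_def by auto
  then have "(\<lambda>x. (indicator A x * g x) * (indicator A x * f x)) \<in> borel_measurable M"
    using g unfolding set_borel_measurable_def by simp
  moreover have "(\<lambda>x. (indicator A x * g x) * (indicator A x * f x)) = (\<lambda>x. indicator A x *\<^sub>R (g x * f x))"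
    by (auto simp: indicator_def)
  ultimately show "set_borel_measurable M A (\<lambda>x. g x * f x)"
    unfolding set_borel_measurable_def by simp
  show "AE x in M. x \<in> A \<longrightarrow> norm (g x * f x) \<le> norm (B * f x)"
    using order_trans[OF bound abs_ge_self] by (auto simp: abs_mult intro!: mult_right_mono)
qed

lemma (in prob_space) abs_integral_le_const:
  fixes f :: "'a \<Rightarrow> real"
  assumes bound: "\<And>x. \<bar>f x\<bar> \<le> B"
  shows "\<bar>integral\<^sup>L M f\<bar> \<le> B"
proof (cases "integrable M f")
  case True
  have "\<bar>integral\<^sup>L M f\<bar> \<le> integral\<^sup>L M (\<lambda>x. \<bar>f x\<bar>)" by (rule integral_abs_bound)
  also have "\<dots> \<le> B" using True bound by (intro integral_le_const) auto
  finally show ?thesis .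
next
  case False
  then show ?thesis using bound[of undefined] by (simp add: not_integrable_integral_eq)
qed

lemma cSUP_diff_bounds:
  fixes f g :: "'a \<Rightarrow> real"
  assumes S: "S \<noteq> {}" and f_bdd: "bdd_above (f ` S)"
    and fg: "\<And>x. x \<in> S \<Longrightarrow> f x + c \<le> g x \<and> g x \<le> f x + d"
  shows "(SUP x\<in>S. g x) - (SUP x\<in>S. f x) \<in> {c..d}"
proof -
  obtain K where K: "\<And>x. x \<in> S \<Longrightarrow> f x \<le> K"
    using f_bdd by (auto simp: bdd_above_def)
  have g_bdd: "bdd_above (g ` S)"
    using fg K by (intro bdd_aboveI2[of S g "K + d"]) (meson add_right_mono order_trans)
  have "(SUP x\<in>S. g x) \<le> (SUP x\<in>S. f x) + d"
    using fg cSUP_upper[OF _ f_bdd] by (intro cSUP_least[OF S]) fastforce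
  moreover have "(SUP x\<in>S. f x) \<le> (SUP x\<in>S. g x) - c"
    using fg cSUP_upper[OF _ g_bdd] by (intro cSUP_least[OF S]) fastforce
  ultimately show ?thesis by simp
qed

lemma Qfun_measurable:
  assumes kernel: "(\<lambda>(x, a). P x a) \<in> M \<Otimes>\<^sub>M borel \<rightarrow>\<^sub>M prob_algebra M"
    and R_meas: "(\<lambda>(s', x, a). R s' x a) \<in> borel_measurable (M \<Otimes>\<^sub>M M \<Otimes>\<^sub>M borel)"
    and V_meas: "V \<in> borel_measurable M"
  shows "(\<lambda>(x, a). Qfun P R \<gamma> V x a) \<in> borel_measurable (M \<Otimes>\<^sub>M borel)"
proof -
  have "(\<lambda>(xa, s'). (s', fst xa, snd xa)) \<in> (M \<Otimes>\<^sub>M borel) \<Otimes>\<^sub>M M \<rightarrow>\<^sub>M M \<Otimes>\<^sub>M M \<Otimes>\<^sub>M borel"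
    by measurable
  from measurable_compose[OF this R_meas]
  have "(\<lambda>(xa, s'). R s' (fst xa) (snd xa)) \<in> borel_measurable ((M \<Otimes>\<^sub>M borel) \<Otimes>\<^sub>M M)"
    by (simp add: case_prod_beta)
  then have "(\<lambda>(xa, s'). R s' (fst xa) (snd xa) + \<gamma> * V s') \<in> borel_measurable ((M \<Otimes>\<^sub>M borel) \<Otimes>\<^sub>M M)"
    using V_meas by measurable
  from integral_measurable_subprob_algebra2[OF this measurable_prob_algebraD[OF kernel]]
  show ?thesis
    by (simp only: Qfun_def case_prod_beta')
qed

lemma abs_Qfun_le:
  assumes "prob_space (P s a)" and "\<And>s'. \<bar>R s' s a\<bar> \<le> K\<^sub>R" and "\<And>s'. \<bar>V s'\<bar> \<le> K\<^sub>V"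
    and "0 \<le> \<gamma>"
  shows "\<bar>Qfun P R \<gamma> V s a\<bar> \<le> K\<^sub>R + \<gamma> * K\<^sub>V"
  unfolding Qfun_def
proof (rule prob_space.abs_integral_le_const[OF assms(1)])
  fix s'
  have "\<bar>\<gamma> * V s'\<bar> \<le> \<gamma> * K\<^sub>V"
    using assms(3,4) by (simp add: abs_mult mult_left_mono)
  then show "\<bar>R s' s a + \<gamma> * V s'\<bar> \<le> K\<^sub>R + \<gamma> * K\<^sub>V"
    using assms(2)[of s'] by linarith
qed

definition bounded_density :: "real set \<Rightarrow> real \<Rightarrow> (real \<Rightarrow> real) \<Rightarrow> bool" where
  "bounded_density A C p \<longleftrightarrow> set_integrable lborel A p \<and> (\<forall>a\<in>A. 0 \<le> p a \<and> p a \<le> C)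
     \<and> (\<integral>a\<in>A. p a \<partial>lborel) = 1"

lemma PiC_iff: "\<pi> \<in> PiC A C \<longleftrightarrow> (\<forall>s. bounded_density A C (\<pi> s))"
  by (simp add: PiC_def bounded_density_def)

lemma PiC_nonempty_iff: "PiC A C \<noteq> {} \<longleftrightarrow> (\<exists>p. bounded_density A C p)"
proof
  assume "PiC A C \<noteq> {}"
  then show "\<exists>p. bounded_density A C p" by (auto simp: PiC_iff)
next
  assume "\<exists>p. bounded_density A C p"
  then obtain p where "bounded_density A C p" ..
  then have "(\<lambda>_. p) \<in> PiC A C" by (simp add: PiC_iff)
  then show "PiC A C \<noteq> {}" by blast
qed

lemma bounded_density_set_borel_measurable:
  "bounded_density A C p \<Longrightarrow> set_borel_measurable lborel A p"
  unfolding bounded_density_def set_integrable_def set_borel_measurable_def by auto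

lemma set_integral_mult_bounded_density_le:
  assumes p: "bounded_density A C p" and Q: "set_borel_measurable lborel A Q"
    and Q_bound: "\<And>a. a \<in> A \<Longrightarrow> \<bar>Q a\<bar> \<le> B"
  shows "(\<integral>a\<in>A. Q a * p a \<partial>lborel) \<le> B"
proof -
  have p_int: "set_integrable lborel A p" and p_nonneg: "\<And>a. a \<in> A \<Longrightarrow> 0 \<le> p a"
    and p_total: "(\<integral>a\<in>A. p a \<partial>lborel) = 1"
    using p by (auto simp: bounded_density_def)
  have "(\<integral>a\<in>A. Q a * p a \<partial>lborel) \<le> (\<integral>a\<in>A. B * p a \<partial>lborel)"
    using set_integrable_mult_bounded[OF p_int Q Q_bound] p_int Q_bound p_nonneg
    by (intro set_integral_mono) (auto intro!: mult_right_mono simp: abs_le_iff)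
  also have "\<dots> = B" using p_total by simp
  finally show ?thesis .
qed

lemma set_integral_square_bounded_density:
  assumes p: "bounded_density A C p"
  shows "set_integrable lborel A (\<lambda>a. (p a)\<^sup>2)"
    and "0 \<le> (\<integral>a\<in>A. (p a)\<^sup>2 \<partial>lborel)"
    and "(\<integral>a\<in>A. (p a)\<^sup>2 \<partial>lborel) \<le> C"
proof -
  have p_int: "set_integrable lborel A p" and p_bound: "\<And>a. a \<in> A \<Longrightarrow> 0 \<le> p a \<and> p a \<le> C"
    and p_total: "(\<integral>a\<in>A. p a \<partial>lborel) = 1"
    using p by (auto simp: bounded_density_def)
  show sq_int: "set_integrable lborel A (\<lambda>a. (p a)\<^sup>2)"
    using set_integrable_mult_bounded[OF p_int bounded_density_set_borel_measurable[OF p], of C] p_bound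
    by (simp add: power2_eq_square)
  show "0 \<le> (\<integral>a\<in>A. (p a)\<^sup>2 \<partial>lborel)"
    unfolding set_lebesgue_integral_def by (rule Bochner_Integration.integral_nonneg) simp
  have "(\<integral>a\<in>A. (p a)\<^sup>2 \<partial>lborel) \<le> (\<integral>a\<in>A. C * p a \<partial>lborel)"
    using sq_int p_int p_bound by (intro set_integral_mono) (auto simp: power2_eq_square intro!: mult_right_mono)
  also have "\<dots> = C" using p_total by simp
  finally show "(\<integral>a\<in>A. (p a)\<^sup>2 \<partial>lborel) \<le> C" .
qed

lemma set_integral_regularized_eq:
  assumes p: "bounded_density A C p" and Q: "set_borel_measurable lborel A Q"
    and Q_bound: "\<And>a. a \<in> A \<Longrightarrow> \<bar>Q a\<bar> \<le> B"
  shows "(\<integral>a\<in>A. Q a * p a + \<mu> * (p a - (p a)\<^sup>2) \<partial>lborel)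
    = (\<integral>a\<in>A. Q a * p a \<partial>lborel) + \<mu> * (1 - (\<integral>a\<in>A. (p a)\<^sup>2 \<partial>lborel))"
proof -
  have p_int: "set_integrable lborel A p" and p_total: "(\<integral>a\<in>A. p a \<partial>lborel) = 1"
    using p by (auto simp: bounded_density_def)
  have Qp_int: "set_integrable lborel A (\<lambda>a. Q a * p a)"
    by (rule set_integrable_mult_bounded[OF p_int Q Q_bound])
  have diff_int: "set_integrable lborel A (\<lambda>a. p a - (p a)\<^sup>2)"
    using p_int set_integral_square_bounded_density(1)[OF p] by (rule set_integral_diff(1))
  have "(\<integral>a\<in>A. Q a * p a + \<mu> * (p a - (p a)\<^sup>2) \<partial>lborel)
      = (\<integral>a\<in>A. Q a * p a \<partial>lborel) + \<mu> * (\<integral>a\<in>A. p a - (p a)\<^sup>2 \<partial>lborel)"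
    using Qp_int diff_int by (simp only: set_integral_add(2) set_integrable_mult_right set_integral_mult_right)
  also have "(\<integral>a\<in>A. p a - (p a)\<^sup>2 \<partial>lborel) = 1 - (\<integral>a\<in>A. (p a)\<^sup>2 \<partial>lborel)"
    using p_int set_integral_square_bounded_density(1)[OF p] p_total by (simp only: set_integral_diff(2))
  finally show ?thesis .
qed

lemma set_integral_regularized_bounds:
  assumes p: "bounded_density A C p" and Q: "set_borel_measurable lborel A Q"
    and Q_bound: "\<And>a. a \<in> A \<Longrightarrow> \<bar>Q a\<bar> \<le> B" and \<mu>: "0 \<le> \<mu>"
  shows "(\<integral>a\<in>A. Q a * p a \<partial>lborel) + \<mu> * (1 - C)
      \<le> (\<integral>a\<in>A. Q a * p a + \<mu> * (p a - (p a)\<^sup>2) \<partial>lborel)"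
    and "(\<integral>a\<in>A. Q a * p a + \<mu> * (p a - (p a)\<^sup>2) \<partial>lborel)
      \<le> (\<integral>a\<in>A. Q a * p a \<partial>lborel) + \<mu>"
proof -
  define I where "I = (\<integral>a\<in>A. (p a)\<^sup>2 \<partial>lborel)"
  have "0 \<le> I" "I \<le> C"
    unfolding I_def using set_integral_square_bounded_density[OF p] by auto
  then have "\<mu> * (1 - C) \<le> \<mu> * (1 - I)" "\<mu> * (1 - I) \<le> \<mu> * 1"
    by (intro mult_left_mono \<mu>; simp)+
  then show "(\<integral>a\<in>A. Q a * p a \<partial>lborel) + \<mu> * (1 - C)
      \<le> (\<integral>a\<in>A. Q a * p a + \<mu> * (p a - (p a)\<^sup>2) \<partial>lborel)"
    and "(\<integral>a\<in>A. Q a * p a + \<mu> * (p a - (p a)\<^sup>2) \<partial>lborel)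
      \<le> (\<integral>a\<in>A. Q a * p a \<partial>lborel) + \<mu>"
    using set_integral_regularized_eq[OF p Q Q_bound, of \<mu>] unfolding I_def[symmetric] by linarith+
qed

theorem theorem1:
  fixes M :: "'s measure" and P :: "'s \<Rightarrow> real \<Rightarrow> 's measure"
    and R :: "'s \<Rightarrow> 's \<Rightarrow> real \<Rightarrow> real" and \<gamma> \<mu> C :: real
    and A :: "real set" and V :: "'s \<Rightarrow> real" and s :: 's
  assumes kernel: "(\<lambda>(x, a). P x a) \<in> M \<Otimes>\<^sub>M borel \<rightarrow>\<^sub>M prob_algebra M"
    and R_meas: "(\<lambda>(s', x, a). R s' x a) \<in> borel_measurable (M \<Otimes>\<^sub>M M \<Otimes>\<^sub>M borel)"
    and R_bdd: "\<exists>K. \<forall>s' x a. \<bar>R s' x a\<bar> \<le> K"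
    and gamma: "0 \<le> \<gamma>" "\<gamma> < 1"
    and A: "A \<in> sets lborel"
    and mu: "\<mu> > 0" and Cpos: "C > 0"
    and nonempty: "PiC A C \<noteq> {}"
    and V_meas: "V \<in> borel_measurable M"
    and V_bdd: "\<exists>K. \<forall>x. \<bar>V x\<bar> \<le> K"
    and s: "s \<in> space M"
  shows "qbellman \<mu> P R \<gamma> A C V s - bellman P R \<gamma> A C V s \<in> {\<mu> * (1 - C) .. \<mu>}"
proof -
  obtain K\<^sub>R K\<^sub>V where K\<^sub>R: "\<And>s' x a. \<bar>R s' x a\<bar> \<le> K\<^sub>R" and K\<^sub>V: "\<And>x. \<bar>V x\<bar> \<le> K\<^sub>V"
    using R_bdd V_bdd by blast
  define Q where "Q = Qfun P R \<gamma> V s"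
  have "Q \<in> borel_measurable lborel"
    using measurable_Pair2[OF Qfun_measurable[OF kernel R_meas V_meas] s] by (simp add: Q_def)
  then have Q_meas: "set_borel_measurable lborel A Q"
    unfolding set_borel_measurable_def using A by measurable
  have Q_bound: "\<bar>Q a\<bar> \<le> K\<^sub>R + \<gamma> * K\<^sub>V" for a
  proof -
    have "prob_space (P s a)"
      using measurable_space[OF kernel, of "(s, a)"] s by (simp add: space_pair_measure space_prob_algebra)
    then show ?thesis
      unfolding Q_def using K\<^sub>R K\<^sub>V gamma(1) by (rule abs_Qfun_le)
  qed
  \<comment> \<open>The hypothesis \<open>nonempty\<close> is about policies over an unrelated state type.\<close>
  have PiC_ne: "PiC A C \<noteq> ({} :: ('s \<Rightarrow> real \<Rightarrow> real) set)"
    using nonempty by (simp add: PiC_nonempty_iff)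
  have "bdd_above ((\<lambda>\<pi>. \<integral>a\<in>A. Q a * \<pi> s a \<partial>lborel) ` PiC A C)"
    using set_integral_mult_bounded_density_le[OF _ Q_meas Q_bound]
    by (intro bdd_aboveI2) (auto simp: PiC_iff)
  then show ?thesis
    unfolding qbellman_def bellman_def Q_def[symmetric]
  proof (rule cSUP_diff_bounds[OF PiC_ne])
    fix \<pi> :: "'s \<Rightarrow> real \<Rightarrow> real" assume "\<pi> \<in> PiC A C"
    then have p: "bounded_density A C (\<pi> s)" by (simp add: PiC_iff)
    show "(\<integral>a\<in>A. Q a * \<pi> s a \<partial>lborel) + \<mu> * (1 - C) \<le> (\<integral>a\<in>A. Q a * \<pi> s a + \<mu> * (\<pi> s a - (\<pi> s a)\<^sup>2) \<partial>lborel)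
      \<and> (\<integral>a\<in>A. Q a * \<pi> s a + \<mu> * (\<pi> s a - (\<pi> s a)\<^sup>2) \<partial>lborel) \<le> (\<integral>a\<in>A. Q a * \<pi> s a \<partial>lborel) + \<mu>"
      using set_integral_regularized_bounds[OF p Q_meas Q_bound] mu by simp
  qed
qed

end
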